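(* Let $m\in\mathbf{N}$ and let $n\le5$ be a positive integer. If $\mathcal{P}$ is a closed set family of shape $(m^n)$, then $\mathcal{P}$ has type $(m^n)\star\nu$ for some partition $\nu$ of $n-1$ with at most $m$ parts.
   Context: Majorization: for $m$-subsets $X=\{x_1<\dots<x_m\}$, $Y=\{y_1<\dots<y_m\}$ of $\mathbf{N}$, $X\preceq Y$ if $x_i\le y_i$ for all $i$. A set family of shape $(m^n)$ is a collection of $n$ distinct $m$-subsets of $\mathbf{N}$; it is closed if $Y$ in it and $X\preceq Y$ imply $X$ in it; it has type $\lambda$ (largest part $a$, conjugate $\lambda'$) if for each $i\in\{1,\dots,a\}$ exactly $\lambda'_i$ of its sets contain $i$ (closed set families always have a type). For a partition $\nu$ of $n-1$ with $k\le m$ parts, $(m^n)\star\nu$ is the partition obtained from the Young diagram of $(m^n)$ by, for each $1\le i\le k$, deleting $\nu_i$ boxes (from the bottom) of column $m+1-i$ and adding $\nu_i$ boxes to row $i$. *)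

theory Defs
  imports Main
begin

definition m_subset :: "nat \<Rightarrow> nat set \<Rightarrow> bool" where
  "m_subset m X \<longleftrightarrow> finite X \<and> card X = m \<and> 0 \<notin> X"

definition majorized :: "nat set \<Rightarrow> nat set \<Rightarrow> bool" where
  "majorized X Y \<longleftrightarrow> finite X \<and> finite Y \<and> card X = card Y \<and>
     (\<forall>i < card X. sorted_list_of_set X ! i \<le> sorted_list_of_set Y ! i)"

definition set_family :: "nat \<Rightarrow> nat \<Rightarrow> nat set set \<Rightarrow> bool" where
  "set_family m n P \<longleftrightarrow> finite P \<and> card P = n \<and> (\<forall>X\<in>P. m_subset m X)"

definition closed_family :: "nat \<Rightarrow> nat set set \<Rightarrow> bool" where
  "closed_family m P \<longleftrightarrow> (\<forall>Y\<in>P. \<forall>X. m_subset m X \<and> majorized X Y \<longrightarrow> X \<in> P)"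

definition nat_partition :: "nat list \<Rightarrow> nat \<Rightarrow> bool" where
  "nat_partition p N \<longleftrightarrow> sorted_wrt (\<ge>) p \<and> 0 \<notin> set p \<and> sum_list p = N"

text \<open>The i-th part (1-indexed), zero beyond the number of parts.\<close>
definition part :: "nat list \<Rightarrow> nat \<Rightarrow> nat" where
  "part p i = (if 1 \<le> i \<and> i \<le> length p then p ! (i - 1) else 0)"

definition conj_part :: "nat list \<Rightarrow> nat \<Rightarrow> nat" where
  "conj_part p j = length (filter (\<lambda>x. j \<le> x) p)"

definition largest_part :: "nat list \<Rightarrow> nat" where
  "largest_part p = (if p = [] then 0 else Max (set p))"

definition has_type :: "nat set set \<Rightarrow> nat list \<Rightarrow> bool" where
  "has_type P lam \<longleftrightarrow>
     (\<forall>i\<in>{1..largest_part lam}. card {S\<in>P. i \<in> S} = conj_part lam i)"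

text \<open>(m^n) \<star> nu: column j (1..m) of (m^n) has length n; column m+1-i loses
nu_i boxes (for i \<le> k; nu_i = 0 for i > k), and row i gains nu_i boxes.
Row r of the result has length #{j \<in> 1..m. r \<le> n - nu_(m+1-j)} + nu_r,
for r = 1..n (rows beyond n are empty since nu has fewer than n parts).\<close>
definition star :: "nat \<Rightarrow> nat \<Rightarrow> nat list \<Rightarrow> nat list" where
  "star m n nu = filter (\<lambda>x. 0 < x)
     (map (\<lambda>r. card {j\<in>{1..m}. r \<le> n - part nu (m + 1 - j)} + part nu r) [1..<n+1])"

end

theory Submission imports Defs begin

text \<open>Majorization is tested by the counting functions \<open>t \<mapsto> #{x \<in> X. x \<le> t}\<close>.
A closed family contains \<open>{1..m}\<close>; with at most five members, every other member is a
single swap \<open>({1..m} - {a}) \<union> {b}\<close> with \<open>a \<le> m < b\<close>, because a member with two elements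
above \<open>m\<close> majorizes four distinct swaps, giving six members. The swaps of a closed family
form a down-set for the order "\<open>a\<close> larger, \<open>b\<close> smaller", so for each \<open>a\<close> the admissible
\<open>b\<close> form an interval \<open>{m<..m + row_len a}\<close> with \<open>row_len\<close> weakly increasing. Then
\<open>\<nu>\<^sub>i = row_len (m + 1 - i)\<close> is a partition of \<open>n - 1\<close>, the element \<open>i \<le> m\<close> lies in
\<open>n - row_len i\<close> members, \<open>m + c\<close> lies in \<open>#{a. c \<le> row_len a}\<close> members, and these are the column
lengths of \<open>(m\<^sup>n) \<star> \<nu>\<close>.\<close>

definition count_upto :: "nat set \<Rightarrow> nat \<Rightarrow> nat" where
  "count_upto X t = card {x\<in>X. x \<le> t}"

lemma sorted_list_nth_le_iff_less_count_upto:
  assumes "finite X" "i < card X"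
  shows "sorted_list_of_set X ! i \<le> t \<longleftrightarrow> i < count_upto X t"
proof -
  define s where "s = sorted_list_of_set X"
  have len: "length s = card X" and dist: "distinct s" and srt: "sorted s" and st: "set s = X"
    using assms(1) by (auto simp: s_def)
  have fin: "finite {x\<in>X. x \<le> t}" using assms(1) by auto
  show ?thesis
  proof
    assume h: "sorted_list_of_set X ! i \<le> t"
    have "(\<lambda>j. s!j) ` {..i} \<subseteq> {x\<in>X. x \<le> t}"
    proof
      fix x assume "x \<in> (\<lambda>j. s!j) ` {..i}"
      then obtain j where j: "j \<le> i" "x = s!j" by auto
      have "s!j \<le> s!i" using sorted_nth_mono[OF srt j(1)] assms(2) len by simp
      moreover have "s!j \<in> X" using st j assms(2) len by (metis le_less_trans nth_mem)
      ultimately show "x \<in> {x\<in>X. x \<le> t}" using j h s_def by auto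
    qed
    moreover have "inj_on (\<lambda>j. s!j) {..i}"
      using dist assms(2) len by (auto simp: inj_on_def nth_eq_iff_index_eq)
    ultimately have "card {..i} \<le> count_upto X t" unfolding count_upto_def
      by (metis card_image card_mono fin)
    then show "i < count_upto X t" by simp
  next
    assume h: "i < count_upto X t"
    show "sorted_list_of_set X ! i \<le> t"
    proof (rule ccontr)
      assume "\<not> ?thesis"
      hence gt: "t < s!i" by (simp add: s_def)
      have "{x\<in>X. x \<le> t} \<subseteq> (\<lambda>j. s!j) ` {..<i}"
      proof
        fix x assume x: "x \<in> {x\<in>X. x \<le> t}"
        then obtain j where j: "j < length s" "x = s!j" using st by (auto simp: in_set_conv_nth)
        have "j < i"
        proof (rule ccontr)
          assume "\<not> j < i"
          hence "s!i \<le> s!j" using sorted_nth_mono[OF srt] j by simp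
          thus False using gt x j by simp
        qed
        thus "x \<in> (\<lambda>j. s!j) ` {..<i}" using j by auto
      qed
      hence "count_upto X t \<le> card ((\<lambda>j. s!j) ` {..<i})"
        unfolding count_upto_def by (simp add: card_mono)
      also have "\<dots> \<le> i" using card_image_le[of "{..<i}"] by simp
      finally show False using h by simp
    qed
  qed
qed

lemma majorized_iff_count_upto_le:
  assumes "finite X" "finite Y" "card X = card Y"
  shows "majorized X Y \<longleftrightarrow> (\<forall>t. count_upto Y t \<le> count_upto X t)"
proof
  assume h: "majorized X Y"
  show "\<forall>t. count_upto Y t \<le> count_upto X t"
  proof
    fix t
    show "count_upto Y t \<le> count_upto X t"
    proof (cases "count_upto Y t = 0")
      case False
      define k where "k = count_upto Y t - 1"
      have "count_upto Y t \<le> card Y" unfolding count_upto_def using assms(2) by (intro card_mono) auto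
      hence k: "k < card Y" using False k_def by simp
      have "sorted_list_of_set Y ! k \<le> t"
        using sorted_list_nth_le_iff_less_count_upto[OF assms(2) k] False k_def by simp
      moreover have "sorted_list_of_set X ! k \<le> sorted_list_of_set Y ! k"
        using h k assms(3) unfolding majorized_def by simp
      ultimately have "sorted_list_of_set X ! k \<le> t" by simp
      hence "k < count_upto X t"
        using sorted_list_nth_le_iff_less_count_upto[OF assms(1)] k assms(3) by simp
      thus ?thesis using k_def by simp
    qed simp
  qed
next
  assume h: "\<forall>t. count_upto Y t \<le> count_upto X t"
  show "majorized X Y" unfolding majorized_def
  proof (intro conjI allI impI)
    fix i assume i: "i < card X"
    have "i < count_upto Y (sorted_list_of_set Y ! i)"
      using sorted_list_nth_le_iff_less_count_upto[OF assms(2), of i "sorted_list_of_set Y ! i"]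
        i assms(3) by simp
    hence "i < count_upto X (sorted_list_of_set Y ! i)" using h by (meson less_le_trans)
    thus "sorted_list_of_set X ! i \<le> sorted_list_of_set Y ! i"
      using sorted_list_nth_le_iff_less_count_upto[OF assms(1) i] by simp
  qed (use assms in auto)
qed

lemma count_upto_mono: "finite X \<Longrightarrow> t \<le> t' \<Longrightarrow> count_upto X t \<le> count_upto X t'"
  unfolding count_upto_def by (intro card_mono) auto

lemma count_upto_le_min:
  assumes "m_subset m X"
  shows "count_upto X t \<le> min t m"
proof -
  have fX: "finite X" and cX: "card X = m" and zX: "0 \<notin> X"
    using assms unfolding m_subset_def by auto
  have "{x\<in>X. x \<le> t} \<subseteq> {1..t}"
  proof
    fix x assume "x \<in> {x\<in>X. x \<le> t}"
    with zX show "x \<in> {1..t}" by (cases x) auto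
  qed
  hence "count_upto X t \<le> t" unfolding count_upto_def using card_mono[of "{1..t}"] by fastforce
  moreover have "count_upto X t \<le> card X" unfolding count_upto_def by (rule card_mono[OF fX]) auto
  ultimately show ?thesis using cX by simp
qed

lemma count_upto_interval: "count_upto {1..m} t = min t m"
proof -
  have "{x\<in>{1..m}. x \<le> t} = {1..min t m}" by auto
  thus ?thesis unfolding count_upto_def by simp
qed

lemma m_subset_interval: "m_subset m {1..m}"
  unfolding m_subset_def by simp

definition swap_set :: "nat \<Rightarrow> nat \<Rightarrow> nat \<Rightarrow> nat set" where
  "swap_set m a b = ({1..m} - {a}) \<union> {b}"

lemma m_subset_swap_set: "1 \<le> a \<Longrightarrow> a \<le> m \<Longrightarrow> m < b \<Longrightarrow> m_subset m (swap_set m a b)"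
  unfolding m_subset_def swap_set_def by auto

lemma swap_set_diff_interval: "m < b \<Longrightarrow> swap_set m a b - {1..m} = {b}"
  unfolding swap_set_def by auto

lemma count_upto_swap_set:
  assumes "1 \<le> a" "a \<le> m" "m < b"
  shows "count_upto (swap_set m a b) t = min t m - (if a \<le> t \<and> t < b then 1 else 0)"
proof (cases "t < a")
  case True
  hence "{x\<in>swap_set m a b. x \<le> t} = {1..min t m}" using assms unfolding swap_set_def by auto
  thus ?thesis using True unfolding count_upto_def by simp
next
  case False
  show ?thesis
  proof (cases "t < b")
    case True
    hence "{x\<in>swap_set m a b. x \<le> t} = {1..min t m} - {a}"
      using assms False unfolding swap_set_def by auto
    thus ?thesis using True False assms unfolding count_upto_def by simp
  next
    case False
    hence "{x\<in>swap_set m a b. x \<le> t} = swap_set m a b" using assms unfolding swap_set_def by auto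
    moreover have "card (swap_set m a b) = m"
      using m_subset_swap_set[OF assms] unfolding m_subset_def by simp
    ultimately show ?thesis using False assms unfolding count_upto_def by simp
  qed
qed

lemma swap_set_inject:
  assumes "1 \<le> a" "a \<le> m" "m < b" "a' \<le> m" "m < b'"
  shows "swap_set m a b = swap_set m a' b' \<longleftrightarrow> a = a' \<and> b = b'"
proof
  assume eq: "swap_set m a b = swap_set m a' b'"
  have "a \<notin> swap_set m a' b'" using eq[symmetric] assms unfolding swap_set_def by simp
  moreover have "a \<in> {1..m}" "a \<noteq> b'" using assms by auto
  ultimately have "a = a'" unfolding swap_set_def by blast
  moreover have "b = b'"
    using swap_set_diff_interval[of m b a] swap_set_diff_interval[of m b' a'] eq assms by simp
  ultimately show "a = a' \<and> b = b'" by simp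
qed simp

lemma swap_set_of_excess_1:
  assumes "m_subset m X" "card (X - {1..m}) = 1"
  shows "\<exists>a b. 1 \<le> a \<and> a \<le> m \<and> m < b \<and> X = swap_set m a b"
proof -
  have fin: "finite X" "card X = m" and zX: "0 \<notin> X" using assms(1) unfolding m_subset_def by auto
  obtain b where b: "X - {1..m} = {b}" using assms(2) card_1_singletonE by blast
  have "card (X - {1..m}) \<le> card X" using fin by (intro card_mono) auto
  hence m1: "1 \<le> m" using fin assms(2) by simp
  have "card (X \<inter> {1..m}) = m - 1"
    using card_Diff_subset_Int[of X "{1..m}"] fin assms(2) by (simp add: Int_commute)
  moreover have "{1..m} - X = {1..m} - X \<inter> {1..m}" by auto
  ultimately have "card ({1..m} - X) = 1"
    using card_Diff_subset[of "X \<inter> {1..m}" "{1..m}"] m1 by simp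
  then obtain a where a: "{1..m} - X = {a}" using card_1_singletonE by blast
  have "X = swap_set m a b" unfolding swap_set_def using a b by blast
  moreover have "b \<in> X - {1..m}" using b by simp
  hence "m < b" using zX by (cases "b = 0") auto
  moreover have "a \<in> {1..m}" using a by blast
  ultimately show ?thesis by auto
qed

lemma count_upto_deficit_of_excess_2:
  assumes X: "m_subset m X" and excess: "2 \<le> card (X - {1..m})"
    and t: "m - 1 \<le> t" "t \<le> m + 1"
  shows "count_upto X t + 1 \<le> min t m"
proof -
  define D where "D = X - {1..m}"
  have fin: "finite X" "card X = m" and zX: "0 \<notin> X" using X unfolding m_subset_def by auto
  have "card D \<le> card X" unfolding D_def using fin by (intro card_mono) auto
  hence m2: "2 \<le> m" using excess fin D_def by simp
  have D_gt: "m < d" if "d \<in> D" for d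
    using that zX unfolding D_def by (cases "d = 0") auto
  have "{x\<in>X. x \<le> m} \<subseteq> X \<inter> {1..m}"
  proof
    fix x assume "x \<in> {x\<in>X. x \<le> m}"
    with zX show "x \<in> X \<inter> {1..m}" by (cases x) auto
  qed
  hence "count_upto X m \<le> card (X \<inter> {1..m})"
    unfolding count_upto_def using fin(1) by (simp add: card_mono)
  moreover have "card D = m - card (X \<inter> {1..m})"
    unfolding D_def using card_Diff_subset_Int[of X "{1..m}"] fin by simp
  moreover have "card (X \<inter> {1..m}) \<le> m" using card_mono[OF fin(1), of "X \<inter> {1..m}"] fin by simp
  moreover have "2 \<le> card D" using excess D_def by simp
  ultimately have at_m: "count_upto X m \<le> m - 2" by linarith
  have "\<not> D \<subseteq> {m + 1}" using excess card_mono[of "{m + 1}" D] unfolding D_def by auto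
  then obtain d where d: "d \<in> D" "m + 2 \<le> d" using D_gt by fastforce
  have "{x\<in>X. x \<le> m + 1} \<subseteq> X - {d}" using d by auto
  hence "count_upto X (m + 1) \<le> card (X - {d})"
    unfolding count_upto_def by (simp add: card_mono fin(1))
  also have "\<dots> = m - 1" using d fin unfolding D_def by (subst card_Diff_singleton) auto
  finally have at_Suc_m: "count_upto X (m + 1) \<le> m - 1" .
  show ?thesis
  proof (cases "t \<le> m")
    case True
    thus ?thesis using count_upto_mono[OF fin(1) True] at_m t m2 by simp
  next
    case False
    hence "t = m + 1" using t by simp
    thus ?thesis using at_Suc_m m2 by simp
  qed
qed

lemma eq_greaterThanAtMost_if_downward_closed:
  fixes A :: "nat set"
  assumes "finite A" "\<forall>k\<in>A. lo < k" "\<forall>k\<in>A. \<forall>k'. lo < k' \<and> k' \<le> k \<longrightarrow> k' \<in> A"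
  shows "A = {lo<..lo + card A}"
proof (cases "A = {}")
  case False
  define M where "M = Max A"
  have MA: "M \<in> A" using False assms(1) M_def by simp
  have "A = {lo<..M}"
  proof
    show "A \<subseteq> {lo<..M}" using assms(1,2) M_def by auto
    show "{lo<..M} \<subseteq> A" using assms(3) MA by auto
  qed
  moreover have "lo < M" using assms(2) MA by auto
  ultimately show ?thesis by simp
qed simp

locale closed_set_family =
  fixes m n :: nat and P :: "nat set set"
  assumes n_pos: "0 < n" and set_family: "set_family m n P" and closed: "closed_family m P"
begin

lemma finite_P: "finite P" and card_P: "card P = n" and m_subset_of_mem: "X \<in> P \<Longrightarrow> m_subset m X"
  using set_family by (simp_all add: set_family_def)

lemma mem_of_count_upto_ge:
  assumes "Y \<in> P" "m_subset m X" "\<And>t. count_upto Y t \<le> count_upto X t"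
  shows "X \<in> P"
proof -
  have "majorized X Y"
    using majorized_iff_count_upto_le[of X Y] assms m_subset_of_mem[OF assms(1)]
    unfolding m_subset_def by auto
  thus ?thesis using closed assms unfolding closed_family_def by blast
qed

lemma interval_mem: "{1..m} \<in> P"
proof -
  obtain Y where Y: "Y \<in> P" using card_P n_pos by fastforce
  show ?thesis
    by (rule mem_of_count_upto_ge[OF Y m_subset_interval])
      (use count_upto_le_min[OF m_subset_of_mem[OF Y]] count_upto_interval in simp)
qed

lemma swap_set_mem_of_excess_2:
  assumes X: "X \<in> P" "2 \<le> card (X - {1..m})"
    and ab: "m - 1 \<le> a" "a \<le> m" "m < b" "b \<le> m + 2"
  shows "swap_set m a b \<in> P"
proof -
  have "card (X - {1..m}) \<le> card X"
    using m_subset_of_mem[OF X(1)] unfolding m_subset_def by (intro card_mono) auto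
  hence a1: "1 \<le> a" using X ab m_subset_of_mem[OF X(1)] unfolding m_subset_def by simp
  show ?thesis
  proof (rule mem_of_count_upto_ge[OF X(1) m_subset_swap_set[OF a1 ab(2,3)]])
    fix t
    show "count_upto X t \<le> count_upto (swap_set m a b) t"
    proof (cases "a \<le> t \<and> t < b")
      case True
      hence "count_upto X t + 1 \<le> min t m"
        using count_upto_deficit_of_excess_2[OF m_subset_of_mem[OF X(1)] X(2)] ab by simp
      thus ?thesis using count_upto_swap_set[OF a1 ab(2,3), of t] True
        by (simp add: min_def split: if_splits)
    next
      case False
      hence "count_upto (swap_set m a b) t = min t m"
        using count_upto_swap_set[OF a1 ab(2,3), of t] by presburger
      thus ?thesis using count_upto_le_min[OF m_subset_of_mem[OF X(1)], of t] by simp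
    qed
  qed
qed

text \<open>Four swaps lie below a member with two elements above \<open>m\<close>; together with it and
\<open>{1..m}\<close> they are six distinct members.\<close>
lemma card_ge_6_of_excess_2:
  assumes X: "X \<in> P" "2 \<le> card (X - {1..m})"
  shows "6 \<le> n"
proof -
  define Q where "Q = (\<lambda>(a, b). swap_set m a b) ` ({m - 1, m} \<times> {m + 1, m + 2})"
  have "card (X - {1..m}) \<le> card X"
    using m_subset_of_mem[OF X(1)] unfolding m_subset_def by (intro card_mono) auto
  hence m2: "2 \<le> m" using X m_subset_of_mem[OF X(1)] unfolding m_subset_def by simp
  have "inj_on (\<lambda>(a, b). swap_set m a b) ({m - 1, m} \<times> {m + 1, m + 2})"
    using m2 by (auto simp: inj_on_def swap_set_inject)
  hence "card Q = 4" using m2 unfolding Q_def by (simp add: card_image card_cartesian_product)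
  moreover have "X \<notin> Q" "{1..m} \<notin> Q"
  proof -
    have excess_1: "\<exists>b. Y - {1..m} = {b}" if "Y \<in> Q" for Y
      using that swap_set_diff_interval unfolding Q_def by fastforce
    show "X \<notin> Q" using excess_1[of X] X(2) by auto
    show "{1..m} \<notin> Q" using excess_1[of "{1..m}"] by auto
  qed
  moreover have "X \<noteq> {1..m}" using X(2) by auto
  moreover have "finite Q" unfolding Q_def by simp
  ultimately have six: "card (insert X (insert {1..m} Q)) = 6" by simp
  moreover have "Q \<subseteq> P"
  proof
    fix Y assume "Y \<in> Q"
    then obtain a b where "a \<in> {m - 1, m}" "b \<in> {m + 1, m + 2}" "Y = swap_set m a b"
      unfolding Q_def by blast
    thus "Y \<in> P" by (auto intro: swap_set_mem_of_excess_2[OF X])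
  qed
  hence "insert X (insert {1..m} Q) \<subseteq> P" using X(1) interval_mem by blast
  from card_mono[OF finite_P this] show ?thesis unfolding six card_P .
qed

lemma mem_eq_swap_set_if_card_le_5:
  assumes "n \<le> 5" "X \<in> P" "X \<noteq> {1..m}"
  shows "\<exists>a b. 1 \<le> a \<and> a \<le> m \<and> m < b \<and> X = swap_set m a b"
proof (rule swap_set_of_excess_1[OF m_subset_of_mem[OF assms(2)]])
  have X: "finite X" "card X = m" using m_subset_of_mem[OF assms(2)] unfolding m_subset_def by auto
  have "X - {1..m} \<noteq> {}"
  proof
    assume "X - {1..m} = {}"
    hence "X = {1..m}" using card_subset_eq[of "{1..m}" X] X by simp
    with assms(3) show False ..
  qed
  hence "card (X - {1..m}) \<noteq> 0" using X by simp
  moreover have "\<not> 2 \<le> card (X - {1..m})"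
  proof
    assume "2 \<le> card (X - {1..m})"
    from card_ge_6_of_excess_2[OF assms(2) this] assms(1) show False by simp
  qed
  ultimately show "card (X - {1..m}) = 1" by simp
qed

end

text \<open>For closed families in which every member other than \<open>{1..m}\<close> is a single swap,
the type is \<open>(m\<^sup>n) \<star> \<nu>\<close> whatever \<open>n\<close> is; \<open>n \<le> 5\<close> only serves to guarantee this shape.\<close>
locale swap_family = closed_set_family +
  assumes swap_shaped: "X \<in> P \<Longrightarrow> X \<noteq> {1..m} \<Longrightarrow> \<exists>a b. 1 \<le> a \<and> a \<le> m \<and> m < b \<and> X = swap_set m a b"
begin

definition swaps :: "(nat \<times> nat) set" where
  "swaps = {(a,b). 1 \<le> a \<and> a \<le> m \<and> m < b \<and> swap_set m a b \<in> P}"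

abbreviation swap_of :: "nat \<times> nat \<Rightarrow> nat set" where "swap_of \<equiv> (\<lambda>(a,b). swap_set m a b)"

lemma swaps_bounds: "(a,b) \<in> swaps \<Longrightarrow> 1 \<le> a \<and> a \<le> m \<and> m < b" unfolding swaps_def by auto

lemma inj_on_swap_of: "inj_on swap_of swaps"
  unfolding inj_on_def swaps_def using swap_set_inject by auto

lemma P_eq_insert_interval: "P = insert {1..m} (swap_of ` swaps)"
proof
  show "P \<subseteq> insert {1..m} (swap_of ` swaps)"
  proof
    fix X assume X: "X \<in> P"
    show "X \<in> insert {1..m} (swap_of ` swaps)"
    proof (cases "X = {1..m}")
      case False
      then obtain a b where "1 \<le> a" "a \<le> m" "m < b" "X = swap_set m a b" using swap_shaped X by blast
      thus ?thesis using X unfolding swaps_def by (auto intro!: image_eqI[of _ _ "(a,b)"])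
    qed simp
  qed
  show "insert {1..m} (swap_of ` swaps) \<subseteq> P" using interval_mem unfolding swaps_def by auto
qed

lemma interval_notin_swaps: "{1..m} \<notin> swap_of ` swaps"
proof
  assume "{1..m} \<in> swap_of ` swaps"
  then obtain a b where ab: "(a,b) \<in> swaps" "{1..m} = swap_set m a b" by auto
  have "b \<in> swap_set m a b" unfolding swap_set_def by simp
  hence "b \<in> {1..m}" using ab(2) by simp
  thus False using swaps_bounds[OF ab(1)] by auto
qed

lemma finite_swaps: "finite swaps"
proof -
  have "swap_of ` swaps \<subseteq> P" using P_eq_insert_interval by auto
  hence "finite (swap_of ` swaps)" using finite_P finite_subset by blast
  thus ?thesis using finite_imageD inj_on_swap_of by blast
qed

lemma card_swaps: "card swaps = n - 1"
proof -
  have "n = card (insert {1..m} (swap_of ` swaps))" using P_eq_insert_interval card_P by simp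
  also have "\<dots> = Suc (card swaps)" using interval_notin_swaps finite_swaps inj_on_swap_of by (simp add: card_image)
  finally show ?thesis by simp
qed

lemma swaps_downward:
  assumes "(a,b) \<in> swaps" "a \<le> a'" "a' \<le> m" "m < b'" "b' \<le> b"
  shows "(a',b') \<in> swaps"
proof -
  have ab: "1 \<le> a" "a \<le> m" "m < b" "swap_set m a b \<in> P" using assms(1) unfolding swaps_def by auto
  have a1: "1 \<le> a'" using ab assms by simp
  have "swap_set m a' b' \<in> P"
  proof (rule mem_of_count_upto_ge[OF ab(4) m_subset_swap_set[OF a1 assms(3,4)]])
    fix t
    show "count_upto (swap_set m a b) t \<le> count_upto (swap_set m a' b') t"
      using count_upto_swap_set[OF ab(1-3), of t] count_upto_swap_set[OF a1 assms(3,4), of t] assms by auto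
  qed
  thus ?thesis unfolding swaps_def using a1 assms by auto
qed

definition row_len :: "nat \<Rightarrow> nat" where "row_len a = card {b. (a,b) \<in> swaps}"

lemma finite_row: "finite {b. (a,b) \<in> swaps}"
proof -
  have "{b. (a,b) \<in> swaps} \<subseteq> snd ` swaps"
  proof
    fix b assume "b \<in> {b. (a,b) \<in> swaps}"
    thus "b \<in> snd ` swaps" using image_eqI[of b snd "(a,b)"] by simp
  qed
  thus ?thesis using finite_swaps finite_subset by blast
qed

lemma row_eq: "{b. (a,b) \<in> swaps} = {m<..m + row_len a}"
  unfolding row_len_def
proof (rule eq_greaterThanAtMost_if_downward_closed[OF finite_row])
  show "\<forall>k\<in>{b. (a, b) \<in> swaps}. m < k" using swaps_bounds by auto
  show "\<forall>k\<in>{b. (a, b) \<in> swaps}. \<forall>k'. m < k' \<and> k' \<le> k \<longrightarrow> k' \<in> {b. (a, b) \<in> swaps}"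
  proof (intro ballI allI impI)
    fix k k' assume k: "k \<in> {b. (a, b) \<in> swaps}" and k': "m < k' \<and> k' \<le> k"
    have "(a,k) \<in> swaps" using k by simp
    moreover have "a \<le> m" using swaps_bounds[OF \<open>(a,k) \<in> swaps\<close>] by simp
    ultimately have "(a,k') \<in> swaps" using swaps_downward[of a k a k'] k' by simp
    thus "k' \<in> {b. (a, b) \<in> swaps}" by simp
  qed
qed

lemma mem_swaps_iff: "(a,b) \<in> swaps \<longleftrightarrow> m < b \<and> b \<le> m + row_len a"
proof -
  have "(a,b) \<in> swaps \<longleftrightarrow> b \<in> {b. (a,b) \<in> swaps}" by simp
  also have "\<dots> \<longleftrightarrow> b \<in> {m<..m + row_len a}" using row_eq by simp
  finally show ?thesis by simp
qed

lemma row_len_mono: "a \<le> a' \<Longrightarrow> a' \<le> m \<Longrightarrow> row_len a \<le> row_len a'"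
proof -
  assume h: "a \<le> a'" "a' \<le> m"
  have "{b. (a,b) \<in> swaps} \<subseteq> {b. (a',b) \<in> swaps}"
  proof
    fix b assume "b \<in> {b. (a,b) \<in> swaps}"
    hence ab: "(a,b) \<in> swaps" by simp
    hence "m < b" using swaps_bounds by simp
    thus "b \<in> {b. (a',b) \<in> swaps}" using swaps_downward[OF ab h(1) h(2) \<open>m < b\<close> order_refl] by simp
  qed
  thus ?thesis unfolding row_len_def by (simp add: card_mono finite_row)
qed

lemma row_len_eq_0: "a = 0 \<or> m < a \<Longrightarrow> row_len a = 0"
proof -
  assume "a = 0 \<or> m < a"
  hence "{b. (a,b) \<in> swaps} = {}" by (auto dest: swaps_bounds)
  thus ?thesis unfolding row_len_def by simp
qed

lemma sum_row_len: "(\<Sum>a\<in>{1..m}. row_len a) = n - 1"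
proof -
  have "swaps = Sigma {1..m} (\<lambda>a. {b. (a,b) \<in> swaps})" using swaps_bounds by auto
  moreover have "card (Sigma {1..m} (\<lambda>a. {b. (a,b) \<in> swaps})) = (\<Sum>a\<in>{1..m}. card {b. (a,b) \<in> swaps})"
    by (rule card_SigmaI) (auto simp: finite_row)
  ultimately have "card swaps = (\<Sum>a\<in>{1..m}. card {b. (a,b) \<in> swaps})" by simp
  thus ?thesis using card_swaps unfolding row_len_def by simp
qed

definition nu_part :: "nat \<Rightarrow> nat" where "nu_part k = row_len (m + 1 - k)"

lemma nu_part_reflect: "1 \<le> j \<Longrightarrow> j \<le> m \<Longrightarrow> nu_part (m + 1 - j) = row_len j"
  unfolding nu_part_def by simp

lemma nu_part_eq_0: "m < k \<Longrightarrow> nu_part k = 0"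
  unfolding nu_part_def using row_len_eq_0 by simp

lemma nu_part_antimono: "1 \<le> k \<Longrightarrow> k \<le> k' \<Longrightarrow> nu_part k' \<le> nu_part k"
proof (cases "m < k'")
  case True thus ?thesis using nu_part_eq_0 by simp
next
  case False
  assume "1 \<le> k" "k \<le> k'"
  thus ?thesis unfolding nu_part_def using False by (intro row_len_mono) auto
qed

lemma sum_nu_part: "(\<Sum>k\<in>{1..m}. nu_part k) = n - 1"
proof -
  have "(\<Sum>k\<in>{1..m}. nu_part k) = (\<Sum>a\<in>{1..m}. row_len a)"
    unfolding nu_part_def
    by (rule sum.reindex_bij_witness[where i="\<lambda>a. m + 1 - a" and j="\<lambda>k. m + 1 - k"]) auto
  thus ?thesis using sum_row_len by simp
qed

definition num_parts :: nat where "num_parts = card {k\<in>{1..m}. 0 < nu_part k}"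

lemma nu_part_pos_iff: "1 \<le> k \<Longrightarrow> (0 < nu_part k \<longleftrightarrow> k \<le> num_parts)"
proof -
  assume k: "1 \<le> k"
  have "{k\<in>{1..m}. 0 < nu_part k} = {0<..0 + num_parts}" unfolding num_parts_def
  proof (rule eq_greaterThanAtMost_if_downward_closed)
    show "\<forall>k'\<in>{k \<in> {1..m}. 0 < nu_part k}. \<forall>k'a. 0 < k'a \<and> k'a \<le> k' \<longrightarrow> k'a \<in> {k \<in> {1..m}. 0 < nu_part k}"
    proof (intro ballI allI impI)
      fix k' k'' assume h1: "k' \<in> {k \<in> {1..m}. 0 < nu_part k}" and h2: "0 < k'' \<and> k'' \<le> k'"
      have "nu_part k' \<le> nu_part k''" using nu_part_antimono[of k'' k'] h2 by simp
      thus "k'' \<in> {k \<in> {1..m}. 0 < nu_part k}" using h1 h2 by auto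
    qed
  qed auto
  moreover have "0 < nu_part k \<longleftrightarrow> k \<in> {k\<in>{1..m}. 0 < nu_part k}"
  proof
    assume h: "0 < nu_part k"
    have "\<not> m < k" using nu_part_eq_0[of k] h by auto
    thus "k \<in> {k\<in>{1..m}. 0 < nu_part k}" using k h by simp
  qed simp
  ultimately show ?thesis using k by auto
qed

lemma num_parts_le: "num_parts \<le> m"
proof -
  have "{k\<in>{1..m}. 0 < nu_part k} \<subseteq> {1..m}" by auto
  hence "num_parts \<le> card {1..m}" unfolding num_parts_def by (rule card_mono[rotated]) simp
  thus ?thesis by simp
qed

definition nu :: "nat list" where "nu = map nu_part [1..<num_parts+1]"

lemma part_nu: "1 \<le> k \<Longrightarrow> part nu k = nu_part k"
  unfolding part_def nu_def using nu_part_pos_iff[of k] by (auto simp: nth_map nth_upt simp del: upt_Suc)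

lemma nu_part_1_add_le:
  assumes r: "1 \<le> r" and pos: "0 < nu_part r"
  shows "nu_part 1 + r \<le> n"
proof -
  have rm: "r \<le> m"
  proof (rule ccontr)
    assume "\<not> r \<le> m"
    with pos show False using nu_part_eq_0 by simp
  qed
  have "(\<Sum>j\<in>{2..r}. 1) \<le> (\<Sum>j\<in>{2..r}. nu_part j)"
  proof (rule sum_mono)
    fix j assume "j \<in> {2..r}"
    thus "1 \<le> nu_part j" using nu_part_antimono[of j r] pos by simp
  qed
  hence "nu_part 1 + (r - 1) \<le> nu_part 1 + (\<Sum>j\<in>{2..r}. nu_part j)" by simp
  also have "\<dots> = (\<Sum>j\<in>{1..r}. nu_part j)"
  proof -
    have "{1..r} = insert 1 {2..r}" using r by auto
    thus ?thesis by simp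
  qed
  also have "\<dots> \<le> (\<Sum>j\<in>{1..m}. nu_part j)" using rm by (intro sum_mono2) auto
  finally show ?thesis using sum_nu_part n_pos r by simp
qed

lemma nu_part_eq_0_if_overflow:
  assumes "1 \<le> r" "1 \<le> k" "n < r + nu_part k"
  shows "nu_part r = 0"
proof (rule ccontr)
  assume "nu_part r \<noteq> 0"
  hence "nu_part 1 + r \<le> n" using nu_part_1_add_le assms(1) by simp
  moreover have "nu_part k \<le> nu_part 1" using nu_part_antimono assms(2) by simp
  ultimately show False using assms(3) by simp
qed

lemma less_if_nu_part_pos: "1 \<le> k \<Longrightarrow> 0 < nu_part k \<Longrightarrow> k < n"
  using nu_part_1_add_le nu_part_antimono[of 1 k] by fastforce

definition star_row :: "nat \<Rightarrow> nat" where
  "star_row r = card {j\<in>{1..m}. r \<le> n - row_len j} + nu_part r"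

lemma star_nu_eq: "star m n nu = filter (\<lambda>x. 0 < x) (map star_row [1..<n+1])"
  unfolding star_def
proof (rule arg_cong[where f="filter (\<lambda>x. 0 < x)"], rule map_cong[OF refl])
  fix r assume "r \<in> set [1..<n+1]"
  hence r: "1 \<le> r" by (simp only: set_upt) auto
  have "{j\<in>{1..m}. r \<le> n - part nu (m + 1 - j)} = {j\<in>{1..m}. r \<le> n - row_len j}"
    using part_nu nu_part_reflect by auto
  thus "card {j\<in>{1..m}. r \<le> n - part nu (m + 1 - j)} + part nu r = star_row r"
    unfolding star_row_def using part_nu[OF r] by simp
qed

lemma conj_part_star_nu: "1 \<le> i \<Longrightarrow> conj_part (star m n nu) i = card {r\<in>{1..n}. i \<le> star_row r}"
proof -
  assume i: "1 \<le> i"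
  have "conj_part (star m n nu) i = length (filter (\<lambda>x. i \<le> x) (map star_row [1..<n+1]))"
    unfolding conj_part_def star_nu_eq filter_filter
    by (rule arg_cong[where f=length], rule filter_cong) (use i in auto)
  also have "\<dots> = card ({x. i \<le> star_row x} \<inter> set [1..<n+1])"
    by (simp add: filter_map distinct_length_filter comp_def)
  also have "{x. i \<le> star_row x} \<inter> set [1..<n+1] = {r\<in>{1..n}. i \<le> star_row r}" by auto
  finally show ?thesis .
qed

lemma card_members_low:
  assumes i: "1 \<le> i" "i \<le> m"
  shows "card {X\<in>P. i \<in> X} = n - row_len i"
proof -
  have eq: "{X\<in>P. i \<notin> X} = swap_of ` ((\<lambda>b. (i,b)) ` {b. (i,b) \<in> swaps})"
  proof
    show "{X\<in>P. i \<notin> X} \<subseteq> swap_of ` ((\<lambda>b. (i,b)) ` {b. (i,b) \<in> swaps})"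
    proof
      fix X assume X: "X \<in> {X\<in>P. i \<notin> X}"
      hence "X \<noteq> {1..m}" using i by auto
      hence "X \<in> swap_of ` swaps" using X P_eq_insert_interval by auto
      then obtain a b where ab: "(a,b) \<in> swaps" "X = swap_set m a b" by auto
      have "a = i"
      proof (rule ccontr)
        assume "a \<noteq> i"
        hence "i \<in> swap_set m a b" using i unfolding swap_set_def by auto
        thus False using X ab by auto
      qed
      thus "X \<in> swap_of ` ((\<lambda>b. (i,b)) ` {b. (i,b) \<in> swaps})" using ab by auto
    qed
    show "swap_of ` ((\<lambda>b. (i,b)) ` {b. (i,b) \<in> swaps}) \<subseteq> {X\<in>P. i \<notin> X}"
    proof
      fix X assume "X \<in> swap_of ` ((\<lambda>b. (i,b)) ` {b. (i,b) \<in> swaps})"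
      then obtain b where b: "(i,b) \<in> swaps" "X = swap_set m i b" by auto
      have "m < b" using swaps_bounds[OF b(1)] by simp
      hence "i \<notin> X" using b(2) i unfolding swap_set_def by auto
      moreover have "X \<in> P" using P_eq_insert_interval b by auto
      ultimately show "X \<in> {X\<in>P. i \<notin> X}" by simp
    qed
  qed
  have "card {X\<in>P. i \<notin> X} = card ((\<lambda>b. (i,b)) ` {b. (i,b) \<in> swaps})"
    unfolding eq by (rule card_image, rule inj_on_subset[OF inj_on_swap_of]) auto
  also have "\<dots> = row_len i" unfolding row_len_def by (rule card_image) (auto simp: inj_on_def)
  finally have c1: "card {X\<in>P. i \<notin> X} = row_len i" .
  have "{X\<in>P. i \<in> X} = P - {X\<in>P. i \<notin> X}" by auto
  hence "card {X\<in>P. i \<in> X} = card P - card {X\<in>P. i \<notin> X}"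
    using card_Diff_subset[of "{X\<in>P. i \<notin> X}" P] finite_P by (simp add: finite_subset)
  thus ?thesis using c1 card_P by simp
qed

lemma card_members_high:
  assumes c: "1 \<le> c"
  shows "card {X\<in>P. m + c \<in> X} = card {a\<in>{1..m}. c \<le> row_len a}"
proof -
  have eq: "{X\<in>P. m + c \<in> X} = swap_of ` ((\<lambda>a. (a, m+c)) ` {a\<in>{1..m}. c \<le> row_len a})"
  proof
    show "{X\<in>P. m + c \<in> X} \<subseteq> swap_of ` ((\<lambda>a. (a, m+c)) ` {a\<in>{1..m}. c \<le> row_len a})"
    proof
      fix X assume X: "X \<in> {X\<in>P. m + c \<in> X}"
      hence "X \<noteq> {1..m}" using c by auto
      hence "X \<in> swap_of ` swaps" using X P_eq_insert_interval by auto
      then obtain a b where ab: "(a,b) \<in> swaps" "X = swap_set m a b" by auto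
      have "b = m + c" using X ab c unfolding swap_set_def by auto
      hence "c \<le> row_len a" "1 \<le> a" "a \<le> m" using mem_swaps_iff[of a b] ab swaps_bounds[OF ab(1)] by auto
      thus "X \<in> swap_of ` ((\<lambda>a. (a, m+c)) ` {a\<in>{1..m}. c \<le> row_len a})"
        using ab \<open>b = m + c\<close> by auto
    qed
    show "swap_of ` ((\<lambda>a. (a, m+c)) ` {a\<in>{1..m}. c \<le> row_len a}) \<subseteq> {X\<in>P. m + c \<in> X}"
    proof
      fix X assume "X \<in> swap_of ` ((\<lambda>a. (a, m+c)) ` {a\<in>{1..m}. c \<le> row_len a})"
      then obtain a where a: "a \<in> {1..m}" "c \<le> row_len a" "X = swap_set m a (m+c)" by auto
      have "(a, m+c) \<in> swaps" using mem_swaps_iff a c by simp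
      hence "X \<in> P" using P_eq_insert_interval a by auto
      moreover have "m + c \<in> X" using a unfolding swap_set_def by simp
      ultimately show "X \<in> {X\<in>P. m + c \<in> X}" by simp
    qed
  qed
  have sub: "(\<lambda>a. (a, m+c)) ` {a\<in>{1..m}. c \<le> row_len a} \<subseteq> swaps" using mem_swaps_iff c by auto
  show ?thesis unfolding eq
    by (subst card_image[OF inj_on_subset[OF inj_on_swap_of sub]], rule card_image) (auto simp: inj_on_def)
qed

lemma le_star_row_iff:
  assumes i: "1 \<le> i" "i \<le> m" and r: "1 \<le> r"
  shows "i \<le> star_row r \<longleftrightarrow> r \<le> n - row_len i"
proof
  assume le: "r \<le> n - row_len i"
  have "{1..i} \<subseteq> {j\<in>{1..m}. r \<le> n - row_len j}"
  proof
    fix j assume j: "j \<in> {1..i}"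
    hence "row_len j \<le> row_len i" using row_len_mono i by simp
    thus "j \<in> {j\<in>{1..m}. r \<le> n - row_len j}" using le i j by auto
  qed
  hence "i \<le> card {j\<in>{1..m}. r \<le> n - row_len j}"
    using card_mono[of "{j\<in>{1..m}. r \<le> n - row_len j}" "{1..i}"] by simp
  thus "i \<le> star_row r" unfolding star_row_def by simp
next
  assume le: "i \<le> star_row r"
  show "r \<le> n - row_len i"
  proof (rule ccontr)
    assume "\<not> r \<le> n - row_len i"
    hence gt: "n < r + nu_part (m + 1 - i)" using nu_part_reflect[OF i] by simp
    have "nu_part r = 0" by (rule nu_part_eq_0_if_overflow[OF r _ gt]) (use i in simp)
    moreover have "{j\<in>{1..m}. r \<le> n - row_len j} \<subseteq> {1..<i}"
    proof
      fix j assume j: "j \<in> {j\<in>{1..m}. r \<le> n - row_len j}"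
      show "j \<in> {1..<i}"
      proof (rule ccontr)
        assume "j \<notin> {1..<i}"
        hence "row_len i \<le> row_len j" using j row_len_mono by auto
        thus False using j gt r nu_part_reflect[OF i] by auto
      qed
    qed
    hence "card {j\<in>{1..m}. r \<le> n - row_len j} \<le> i - 1"
      using card_mono[of "{1..<i}"] by fastforce
    ultimately show False using le i unfolding star_row_def by simp
  qed
qed

lemma card_star_rows_low:
  assumes "1 \<le> i" "i \<le> m"
  shows "card {r\<in>{1..n}. i \<le> star_row r} = n - row_len i"
proof -
  have "{r\<in>{1..n}. i \<le> star_row r} = {1..n - row_len i}"
    using le_star_row_iff[OF assms] by auto
  thus ?thesis by simp
qed

lemma star_row_le: "star_row r \<le> m + nu_part r"
proof -
  have "card {j\<in>{1..m}. r \<le> n - row_len j} \<le> card {1..m}" by (rule card_mono) auto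
  thus ?thesis unfolding star_row_def by simp
qed

lemma star_row_eq_if_nu_part_pos:
  assumes k: "1 \<le> k" "0 < nu_part k"
  shows "star_row k = m + nu_part k"
proof -
  have "k \<le> n - row_len j" if j: "j \<in> {1..m}" for j
  proof (rule ccontr)
    assume "\<not> k \<le> n - row_len j"
    hence "n < k + nu_part (m + 1 - j)" using nu_part_reflect j by auto
    hence "nu_part k = 0" using nu_part_eq_0_if_overflow[OF k(1), of "m + 1 - j"] j
      by (simp add: Suc_diff_le)
    thus False using k(2) by simp
  qed
  hence "{j\<in>{1..m}. k \<le> n - row_len j} = {1..m}" by auto
  thus ?thesis unfolding star_row_def by simp
qed

lemma card_star_rows_high:
  assumes c: "1 \<le> c"
  shows "card {r\<in>{1..n}. m + c \<le> star_row r} = card {a\<in>{1..m}. c \<le> row_len a}"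
proof -
  have "{r\<in>{1..n}. m + c \<le> star_row r} = {k\<in>{1..m}. c \<le> nu_part k}"
  proof
    show "{r\<in>{1..n}. m + c \<le> star_row r} \<subseteq> {k\<in>{1..m}. c \<le> nu_part k}"
    proof
      fix r assume r: "r \<in> {r\<in>{1..n}. m + c \<le> star_row r}"
      hence "c \<le> nu_part r" using star_row_le[of r] by simp
      moreover have "r \<le> m" using nu_part_eq_0[of r] c calculation by (cases "r \<le> m") auto
      ultimately show "r \<in> {k\<in>{1..m}. c \<le> nu_part k}" using r by simp
    qed
    show "{k\<in>{1..m}. c \<le> nu_part k} \<subseteq> {r\<in>{1..n}. m + c \<le> star_row r}"
    proof
      fix k assume k: "k \<in> {k\<in>{1..m}. c \<le> nu_part k}"
      hence "1 \<le> k" "0 < nu_part k" using c by auto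
      thus "k \<in> {r\<in>{1..n}. m + c \<le> star_row r}"
        using k less_if_nu_part_pos star_row_eq_if_nu_part_pos by fastforce
    qed
  qed
  moreover have "bij_betw (\<lambda>k. m + 1 - k) {k\<in>{1..m}. c \<le> nu_part k} {a\<in>{1..m}. c \<le> row_len a}"
    by (rule bij_betw_byWitness[where f'="\<lambda>a. m + 1 - a"]) (auto simp: nu_part_def)
  ultimately show ?thesis by (simp add: bij_betw_same_card)
qed

lemma has_type_star_nu: "has_type P (star m n nu)"
  unfolding has_type_def
proof
  fix i assume "i \<in> {1..largest_part (star m n nu)}"
  hence i: "1 \<le> i" by simp
  show "card {X\<in>P. i \<in> X} = conj_part (star m n nu) i"
  proof (cases "i \<le> m")
    case True
    thus ?thesis using card_members_low card_star_rows_low conj_part_star_nu i by simp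
  next
    case False
    define c where "c = i - m"
    have c: "i = m + c" "1 \<le> c" using False unfolding c_def by auto
    thus ?thesis using card_members_high card_star_rows_high conj_part_star_nu i by simp
  qed
qed

lemma nat_partition_nu: "nat_partition nu (n - 1)"
  unfolding nat_partition_def
proof (intro conjI)
  show "sorted_wrt (\<ge>) nu" unfolding nu_def sorted_wrt_map
    by (rule sorted_wrt_mono_rel[OF _ sorted_wrt_upt]) (auto intro: nu_part_antimono)
  show "0 \<notin> set nu"
  proof
    assume "0 \<in> set nu"
    then obtain k where k: "k \<in> {1..<num_parts+1}" "nu_part k = 0" unfolding nu_def by (auto simp del: upt_Suc)
    thus False using nu_part_pos_iff[of k] by simp
  qed
  have "sum_list nu = (\<Sum>k\<in>{1..<num_parts+1}. nu_part k)" unfolding nu_def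
    by (simp add: sum_set_upt_conv_sum_list_nat[symmetric])
  also have "\<dots> = (\<Sum>k\<in>{1..m}. nu_part k)"
  proof (rule sum.mono_neutral_left)
    show "\<forall>k\<in>{1..m} - {1..<num_parts+1}. nu_part k = 0"
    proof
      fix k assume "k \<in> {1..m} - {1..<num_parts+1}"
      thus "nu_part k = 0" using nu_part_pos_iff[of k] by auto
    qed
  qed (use num_parts_le in auto)
  finally show "sum_list nu = n - 1" using sum_nu_part by simp
qed


end

theorem lemma5p5:
  fixes m n :: nat and P :: "nat set set"
  assumes "0 < n" and "n \<le> 5"
    and "set_family m n P" and "closed_family m P"
  shows "\<exists>nu. nat_partition nu (n - 1) \<and> length nu \<le> m \<and> has_type P (star m n nu)"
proof -
  interpret closed_set_family m n P using assms by unfold_locales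
  interpret swap_family m n P
    by unfold_locales (rule mem_eq_swap_set_if_card_le_5[OF assms(2)])
  have "length nu \<le> m" using num_parts_le by (simp add: nu_def)
  thus ?thesis using nat_partition_nu has_type_star_nu by blast
qed

end
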